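(* In the event-driven HotStuff implementation (as defined in the context), let $b$ and $w$ be two conflicting nodes such that $b.\mathit{height} = w.\mathit{height}$. Then $b$ and $w$ cannot both have valid quorum certificates.
   Context: There are $n = 3f+1$ replicas, at most $f$ of which are Byzantine; the others are honest. Messages are signed with unforgeable signatures. Replicas build a tree of nodes; each node $b$ has a parent $b.\mathit{parent}$, a height $b.\mathit{height}$ equal to its parent's height plus one, a command $b.\mathit{cmd}$, and a quorum certificate $b.\mathit{justify}$. A (valid) quorum certificate (QC) for a node $x$ consists of votes for $x$ signed by $2f+1$ distinct replicas; $\mathit{qc}.\mathit{node}$ denotes the node it refers to. Two nodes are conflicting if neither is an ancestor-or-equal of the other. Voting rule of an honest replica: it keeps a variable $\mathit{vheight}$ (height of the last node it voted for) and a locked node $b_{\mathit{lock}}$. Upon receiving a proposal $b_{\mathit{new}}$, it votes for $b_{\mathit{new}}$ only if $b_{\mathit{new}}.\mathit{height} > \mathit{vheight}$ and ($b_{\mathit{new}}$ extends $b_{\mathit{lock}}$ or $b_{\mathit{new}}.\mathit{justify}.\mathit{node}.\mathit{height} > b_{\mathit{lock}}.\mathit{height}$); when it votes it sets $\mathit{vheight} \leftarrow b_{\mathit{new}}.\mathit{height}$. In particular an honest replica votes at most once per height. *)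

theory Defs
  imports Main
begin

text \<open>Node tree: parent is None for the genesis/root node. a is an ancestor-or-equal of b.\<close>
definition ancestor_eq :: "('n \<Rightarrow> 'n option) \<Rightarrow> 'n \<Rightarrow> 'n \<Rightarrow> bool" where
  "ancestor_eq parent a b \<longleftrightarrow> (\<lambda>x y. parent y = Some x)\<^sup>*\<^sup>* a b"

definition conflicting :: "('n \<Rightarrow> 'n option) \<Rightarrow> 'n \<Rightarrow> 'n \<Rightarrow> bool" where
  "conflicting parent a b \<longleftrightarrow> \<not> ancestor_eq parent a b \<and> \<not> ancestor_eq parent b a"

definition tree_heights :: "('n \<Rightarrow> 'n option) \<Rightarrow> ('n \<Rightarrow> nat) \<Rightarrow> bool" where
  "tree_heights parent height \<longleftrightarrow> (\<forall>b p. parent b = Some p \<longrightarrow> height b = Suc (height p))"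

text \<open>A valid QC for x: signed votes for x by 2f+1 distinct replicas. By unforgeability,
  a replica's vote exists only if it actually cast it, i.e. x occurs in its vote history.\<close>
definition has_valid_qc :: "'r set \<Rightarrow> nat \<Rightarrow> ('r \<Rightarrow> 'n list) \<Rightarrow> 'n \<Rightarrow> bool" where
  "has_valid_qc R f votes x \<longleftrightarrow>
     (\<exists>Q. Q \<subseteq> R \<and> card Q \<ge> 2 * f + 1 \<and> (\<forall>r\<in>Q. x \<in> set (votes r)))"

text \<open>Honest voting rule applied to a chronological vote history vs.
  vheight starts at 0 and equals the height of the last voted node; locks i is the
  locked node when the i-th vote is cast; justify b is b.justify.node.\<close>
definition honest_votes ::
  "('n \<Rightarrow> 'n option) \<Rightarrow> ('n \<Rightarrow> nat) \<Rightarrow> ('n \<Rightarrow> 'n) \<Rightarrow> (nat \<Rightarrow> 'n) \<Rightarrow> 'n list \<Rightarrow> bool" where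
  "honest_votes parent height justify locks vs \<longleftrightarrow>
     (\<forall>i < length vs.
        height (vs ! i) > (if i = 0 then 0 else height (vs ! (i - 1))) \<and>
        (ancestor_eq parent (locks i) (vs ! i) \<or> height (justify (vs ! i)) > height (locks i)))"

end

theory Submission
  imports Defs
begin

text \<open>Two quorums of size 2f+1 among 3f+1 replicas share at least f+1 members, so at least one
  honest replica voted for both nodes. Since an honest replica votes at strictly increasing
  heights, it votes for at most one node per height; hence two nodes of equal height with
  valid QCs coincide, and in particular are not conflicting.\<close>

lemma honest_votes_heights_strictly_sorted:
  assumes "honest_votes parent height justify locks vs"
  shows "sorted_wrt (<) (map height vs)"
proof -
  have "height (vs ! i) < height (vs ! Suc i)" if "Suc i < length vs" for i
    using assms that unfolding honest_votes_def by (metis diff_Suc_1 nat.distinct(1))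
  then show ?thesis
    by (simp add: sorted_wrt_iff_nth_Suc_transp)
qed

lemma honest_votes_inj_on_height:
  assumes "honest_votes parent height justify locks vs"
  shows "inj_on height (set vs)"
  using honest_votes_heights_strictly_sorted[OF assms]
  by (simp add: strict_sorted_iff distinct_map)

lemma quorums_share_non_faulty_member:
  assumes "finite R" "Q1 \<subseteq> R" "Q2 \<subseteq> R" "F \<subseteq> R"
    and "card R + card F < card Q1 + card Q2"
  obtains r where "r \<in> Q1" "r \<in> Q2" "r \<notin> F"
proof -
  have "finite Q1" "finite Q2" "finite F"
    using assms(1-4) finite_subset by blast+
  have "card Q1 + card Q2 = card (Q1 \<union> Q2) + card (Q1 \<inter> Q2)"
    using card_Un_Int[OF \<open>finite Q1\<close> \<open>finite Q2\<close>] .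
  moreover have "card (Q1 \<union> Q2) \<le> card R"
    using assms(1-3) by (intro card_mono) auto
  ultimately have "card F < card (Q1 \<inter> Q2)"
    using assms(5) by linarith
  then have "\<not> Q1 \<inter> Q2 \<subseteq> F"
    using card_mono[OF \<open>finite F\<close>] by (meson leD)
  then show ?thesis
    using that by blast
qed

lemma conflicting_imp_neq:
  "conflicting parent a b \<Longrightarrow> a \<noteq> b"
  by (auto simp: conflicting_def ancestor_eq_def)

theorem mainTheorem2:
  fixes R Byz :: "'r set" and f :: nat
    and votes :: "'r \<Rightarrow> 'n list"
    and parent :: "'n \<Rightarrow> 'n option" and height :: "'n \<Rightarrow> nat" and justify :: "'n \<Rightarrow> 'n"
    and locks :: "'r \<Rightarrow> nat \<Rightarrow> 'n"
    and b w :: 'n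
  assumes "finite R" and "card R = 3 * f + 1"
    and "Byz \<subseteq> R" and "card Byz \<le> f"
    and "tree_heights parent height"
    and "\<forall>r \<in> R - Byz. honest_votes parent height justify (locks r) (votes r)"
    and "conflicting parent b w" and "height b = height w"
  shows "\<not> (has_valid_qc R f votes b \<and> has_valid_qc R f votes w)"
proof
  assume "has_valid_qc R f votes b \<and> has_valid_qc R f votes w"
  then obtain Qb Qw
    where Qb: "Qb \<subseteq> R" "card Qb \<ge> 2 * f + 1" "\<forall>r\<in>Qb. b \<in> set (votes r)"
      and Qw: "Qw \<subseteq> R" "card Qw \<ge> 2 * f + 1" "\<forall>r\<in>Qw. w \<in> set (votes r)"
    unfolding has_valid_qc_def by blast
  have "card R + card Byz < card Qb + card Qw"
    using assms(2,4) Qb(2) Qw(2) by linarith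
  then obtain r where r: "r \<in> Qb" "r \<in> Qw" "r \<notin> Byz"
    using quorums_share_non_faulty_member[OF assms(1) Qb(1) Qw(1) assms(3)] by blast
  have "inj_on height (set (votes r))"
    using honest_votes_inj_on_height assms(6) Qb(1) r by blast
  then have "b = w"
    using Qb(3) Qw(3) r assms(8) by (meson inj_onD)
  then show False
    using conflicting_imp_neq[OF assms(7)] by contradiction
qed

end
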